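(* Let $b\ge0$. Consider an instance with $m$ machines and $n$ jobs, an assignment $\{J_i\}_{i=1}^m$, and integers $\ell_1,\dots,\ell_m\in[m]$ such that for every $\ell\in[m]$ at most $\ell$ machines $i$ have $\ell_i\le\ell$. Suppose $$\sum_{i=1}^m\sum_{j\in J_i}\mathbb{E}[X''_{ij}]\le2\qquad\text{and}\qquad\sum_{j\in J_i}\beta_{\ell_i}(X'_{ij})\le b+1\ \ \text{for all } i\in[m].$$ Then the expected makespan $\mathbb{E}\big[\max_{i}\sum_{j\in J_i}X_{ij}\big]$ is at most $4b+10$.
   Context: Nonnegative random variables $X_{ij}$ (size of job $j$ on machine $i$), with $X_{ij}$ and $X_{i'j'}$ independent whenever $j\ne j'$. $X'_{ij}:=X_{ij}\mathbf{1}[X_{ij}\le1]$, $X''_{ij}:=X_{ij}\mathbf{1}[X_{ij}>1]$. Effective size: $\beta_k(X):=\frac{1}{\ln k}\ln\mathbb{E}[e^{(\ln k)X}]$ for integers $k\ge2$, $\beta_1(X):=\mathbb{E}[X]$. *)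

theory Defs
  imports "HOL-Probability.Probability"
begin

definition small_part :: "('a \<Rightarrow> real) \<Rightarrow> 'a \<Rightarrow> real" where
  "small_part Y = (\<lambda>\<omega>. if Y \<omega> \<le> 1 then Y \<omega> else 0)"

definition large_part :: "('a \<Rightarrow> real) \<Rightarrow> 'a \<Rightarrow> real" where
  "large_part Y = (\<lambda>\<omega>. if Y \<omega> > 1 then Y \<omega> else 0)"

definition eff_size :: "'a measure \<Rightarrow> nat \<Rightarrow> ('a \<Rightarrow> real) \<Rightarrow> real" where
  "eff_size M k Y = (if k \<le> 1 then (\<integral>\<omega>. Y \<omega> \<partial>M)
      else ln (\<integral>\<omega>. exp (ln (real k) * Y \<omega>) \<partial>M) / ln (real k))"

end

theory Submission
  imports Defs
begin

(* Split the load of machine i as S_i + L_i, where S_i sums the truncated sizes X'_ij and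
   L_i the large parts X''_ij. Pointwise, max_i (S_i + L_i) <= a + sum_i (S_i - a)^+ + sum_i L_i
   with a = b + 3, and the last sum has expectation at most 2. On a machine of level k >= 2,
   ln k >= 1/2 gives x^+ <= 2 k^x, so independence yields the Chernoff-type estimate
   E[(S_i - a)^+] <= 2 k^(sum_j beta_k(X'_ij) - a) <= 2/k^2; on level 1 simply
   E[(S_i - a)^+] <= E[S_i] <= b + 1. Since the l-th smallest level is at least l, these
   decreasing bounds sum to at most b + 1 + 2 * sum_{l>=2} 1/l^2 <= b + 3, so the expected
   makespan is at most 2b + 8. *)

lemma sum_telescope_weighted:
  fixes f :: "nat \<Rightarrow> real"
  shows "(\<Sum>r=1..m. (f r - f (Suc r)) * real r) + real m * f (Suc m) = (\<Sum>r=1..m. f r)"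
  by (induction m) (simp_all add: algebra_simps)

(* Abel summation: the difference f r - f (r + 1) >= 0 is counted once for each i with
   lv i <= r, i.e. at most r times. *)
lemma sum_le_sum_levels_antimono:
  fixes f :: "nat \<Rightarrow> real" and lv :: "nat \<Rightarrow> nat"
  assumes range: "\<And>i. i < m \<Longrightarrow> lv i \<in> {1..m}"
    and card_le: "\<And>l. l \<in> {1..m} \<Longrightarrow> card {i. i < m \<and> lv i \<le> l} \<le> l"
    and antimono: "\<And>k l. 1 \<le> k \<Longrightarrow> k \<le> l \<Longrightarrow> f l \<le> f k"
  shows "(\<Sum>i<m. f (lv i)) \<le> (\<Sum>l=1..m. f l)"
proof -
  define d where "d r = f r - f (Suc r)" for r
  have tail: "f (lv i) = (\<Sum>r=1..m. if lv i \<le> r then d r else 0) + f (Suc m)" if "i < m" for i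
  proof -
    have "(\<Sum>r=1..m. if lv i \<le> r then d r else 0) = (\<Sum>r=lv i..m. d r)"
      using range[OF that] by (intro sum.mono_neutral_cong_right) auto
    also have "\<dots> = - (\<Sum>r=lv i..m. f (Suc r) - f r)"
      by (simp add: d_def flip: sum_negf)
    also have "\<dots> = f (lv i) - f (Suc m)"
      using range[OF that] by (simp add: sum_Suc_diff)
    finally show ?thesis by simp
  qed
  have count: "(\<Sum>i<m. if lv i \<le> r then d r else 0) = d r * real (card {i. i < m \<and> lv i \<le> r})" for r
    by (simp add: sum.If_cases Int_def conj_commute)
  have "(\<Sum>i<m. f (lv i)) = (\<Sum>r=1..m. d r * real (card {i. i < m \<and> lv i \<le> r})) + real m * f (Suc m)"
    by (simp add: tail sum.distrib count[symmetric]) (rule sum.swap)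
  also have "\<dots> \<le> (\<Sum>r=1..m. d r * real r) + real m * f (Suc m)"
    using card_le antimono by (intro add_right_mono sum_mono mult_left_mono) (auto simp: d_def)
  finally show ?thesis using sum_telescope_weighted[of f m] by (simp add: d_def)
qed

lemma sum_inverse_squares_le_one: "(\<Sum>l=2..m. 1 / (real l)^2) \<le> 1"
proof -
  have bound: "(\<Sum>l=2..m. 1 / (real l)^2) \<le> 1 - 1 / real m" if "m \<ge> 1" for m
    using that
  proof (induction m rule: nat_induct_at_least)
    case (Suc m)
    have "1 / (real m + 1)^2 \<le> 1 / (real m * (real m + 1))"
      using Suc.hyps by (intro divide_left_mono) (auto simp: power2_eq_square)
    also have "\<dots> = 1 / real m - 1 / real (Suc m)"
      using Suc.hyps by (simp add: field_simps)
    finally show ?case using Suc by (simp add: add.commute)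
  qed simp
  show ?thesis
  proof (cases "m = 0")
    case False
    then show ?thesis using bound[of m] by (simp add: order_trans)
  qed simp
qed

definition excess_bound :: "real \<Rightarrow> nat \<Rightarrow> real" where
  "excess_bound b k = (if k \<le> 1 then b + 1 else 2 / (real k)^2)"

lemma excess_bound_antimono:
  assumes "b \<ge> 0" "1 \<le> k" "k \<le> l"
  shows "excess_bound b l \<le> excess_bound b k"
proof (cases "l \<le> 1")
  case False
  show ?thesis
  proof (cases "k \<le> 1")
    case True
    have "2 / (real l)^2 \<le> 2 / 2^2"
      using False by (intro divide_left_mono power_mono) auto
    also have "\<dots> \<le> b + 1"
      using assms(1) by simp
    finally show ?thesis
      using True False by (simp add: excess_bound_def)
  next
    case k: False
    have "2 / (real l)^2 \<le> 2 / (real k)^2"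
      using assms by (intro divide_left_mono power_mono) auto
    then show ?thesis using k False by (simp add: excess_bound_def)
  qed
qed (use assms in \<open>simp add: excess_bound_def\<close>)

lemma sum_excess_bound_le:
  assumes "b \<ge> 0"
  shows "(\<Sum>l=1..m. excess_bound b l) \<le> b + 3"
proof (cases "m = 0")
  case False
  then have "{1..m} = insert 1 {2..m}" by auto
  then have "(\<Sum>l=1..m. excess_bound b l) = b + 1 + 2 * (\<Sum>l=2..m. 1 / (real l)^2)"
    by (simp add: excess_bound_def sum_distrib_left)
  then show ?thesis using sum_inverse_squares_le_one[of m] by simp
qed (use assms in simp)

lemma sum_excess_bound_levels_le:
  assumes "b \<ge> 0"
    and "\<And>i. i < m \<Longrightarrow> lv i \<in> {1..m}"
    and "\<And>l. l \<in> {1..m} \<Longrightarrow> card {i. i < m \<and> lv i \<le> l} \<le> l"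
  shows "(\<Sum>i<m. excess_bound b (lv i)) \<le> b + 3"
  using sum_le_sum_levels_antimono[of m lv "excess_bound b"] excess_bound_antimono[of b]
    sum_excess_bound_le[of b m] assms by fastforce

lemma small_part_add_large_part: "small_part Y \<omega> + large_part Y \<omega> = Y \<omega>"
  by (simp add: small_part_def large_part_def)

lemma borel_measurable_small_part [measurable]:
  assumes [measurable]: "Y \<in> borel_measurable M"
  shows "small_part Y \<in> borel_measurable M"
  unfolding small_part_def by measurable

lemma max_0_le_exp:
  fixes c x :: real
  assumes "c \<ge> 1/2"
  shows "max 0 x \<le> 2 * exp (c * x)"
proof (cases "x \<le> 0")
  case False
  then have "x \<le> 2 * (c * x)"
    using assms mult_right_mono[of "1/2" c x] by simp
  also have "\<dots> \<le> 2 * exp (c * x)"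
    using exp_ge_add_one_self[of "c * x"] by linarith
  finally show ?thesis using False by simp
qed simp

context prob_space
begin

lemma indep_vars_component:
  fixes X :: "'i \<Rightarrow> 'j \<Rightarrow> 'a \<Rightarrow> 'b::topological_space"
  assumes "indep_vars (\<lambda>j. PiM I (\<lambda>_. borel)) (\<lambda>j \<omega>. \<lambda>i\<in>I. X i j \<omega>) K" "i \<in> I"
  shows "indep_vars (\<lambda>_. borel) (\<lambda>j. X i j) K"
  using indep_vars_compose2[OF assms(1), of "\<lambda>_ v. v i" "\<lambda>_. borel"] assms(2) by simp

lemma indep_vars_small_part:
  assumes "indep_vars (\<lambda>_. borel) Y J"
  shows "indep_vars (\<lambda>_. borel) (\<lambda>j. small_part (Y j)) J"
  using indep_vars_compose2[OF assms, of "\<lambda>_ x. if x \<le> 1 then x else 0" "\<lambda>_. borel"]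
  by (simp add: small_part_def)

lemma nn_integral_SUP_le_threshold:
  fixes S L :: "'i \<Rightarrow> 'a \<Rightarrow> real"
  assumes I: "finite I" and a: "a \<ge> 0"
    and S: "\<And>i. i \<in> I \<Longrightarrow> S i \<in> borel_measurable M"
    and L: "\<And>i. i \<in> I \<Longrightarrow> L i \<in> borel_measurable M"
      "\<And>i \<omega>. i \<in> I \<Longrightarrow> \<omega> \<in> space M \<Longrightarrow> 0 \<le> L i \<omega>"
  shows "(\<integral>\<^sup>+\<omega>. (SUP i\<in>I. ennreal (S i \<omega> + L i \<omega>)) \<partial>M)
      \<le> ennreal a + (\<Sum>i\<in>I. \<integral>\<^sup>+\<omega>. ennreal (max 0 (S i \<omega> - a)) \<partial>M)
         + (\<Sum>i\<in>I. \<integral>\<^sup>+\<omega>. ennreal (L i \<omega>) \<partial>M)"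
proof -
  have pointwise: "(SUP i\<in>I. ennreal (S i \<omega> + L i \<omega>))
      \<le> ennreal a + (\<Sum>i\<in>I. ennreal (max 0 (S i \<omega> - a))) + (\<Sum>i\<in>I. ennreal (L i \<omega>))"
    if \<omega>: "\<omega> \<in> space M" for \<omega>
  proof (rule SUP_least)
    fix i assume i: "i \<in> I"
    have "S i \<omega> + L i \<omega> \<le> a + (\<Sum>i\<in>I. max 0 (S i \<omega> - a)) + (\<Sum>i\<in>I. L i \<omega>)"
      using member_le_sum[of i I "\<lambda>i. max 0 (S i \<omega> - a)"] member_le_sum[of i I "\<lambda>i. L i \<omega>"]
        i I L(2) \<omega> by force
    then have "ennreal (S i \<omega> + L i \<omega>)
        \<le> ennreal (a + (\<Sum>i\<in>I. max 0 (S i \<omega> - a)) + (\<Sum>i\<in>I. L i \<omega>))"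
      by (rule ennreal_leI)
    also have "\<dots> = ennreal a + (\<Sum>i\<in>I. ennreal (max 0 (S i \<omega> - a))) + (\<Sum>i\<in>I. ennreal (L i \<omega>))"
      using a L(2) \<omega> by (simp add: ennreal_plus sum_nonneg flip: sum_ennreal)
    finally show "ennreal (S i \<omega> + L i \<omega>) \<le> \<dots>" .
  qed
  have "(\<integral>\<^sup>+\<omega>. (SUP i\<in>I. ennreal (S i \<omega> + L i \<omega>)) \<partial>M)
      \<le> (\<integral>\<^sup>+\<omega>. ennreal a + (\<Sum>i\<in>I. ennreal (max 0 (S i \<omega> - a))) + (\<Sum>i\<in>I. ennreal (L i \<omega>)) \<partial>M)"
    by (rule nn_integral_mono) (rule pointwise)
  also have "\<dots> = ennreal a + (\<Sum>i\<in>I. \<integral>\<^sup>+\<omega>. ennreal (max 0 (S i \<omega> - a)) \<partial>M)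
         + (\<Sum>i\<in>I. \<integral>\<^sup>+\<omega>. ennreal (L i \<omega>) \<partial>M)"
    using S L(1) by (simp add: nn_integral_add nn_integral_sum I emeasure_space_1)
  finally show ?thesis .
qed

lemma nn_integral_excess_le_sum_expectation:
  assumes J: "finite J" and a: "a \<ge> 0"
    and Y: "\<And>j. j \<in> J \<Longrightarrow> integrable M (Y j)" "\<And>j \<omega>. j \<in> J \<Longrightarrow> \<omega> \<in> space M \<Longrightarrow> 0 \<le> Y j \<omega>"
  shows "(\<integral>\<^sup>+\<omega>. ennreal (max 0 ((\<Sum>j\<in>J. Y j \<omega>) - a)) \<partial>M) \<le> ennreal (\<Sum>j\<in>J. expectation (Y j))"
proof -
  have "(\<integral>\<^sup>+\<omega>. ennreal (max 0 ((\<Sum>j\<in>J. Y j \<omega>) - a)) \<partial>M) \<le> (\<integral>\<^sup>+\<omega>. ennreal (\<Sum>j\<in>J. Y j \<omega>) \<partial>M)"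
    using Y(2) a by (intro nn_integral_mono ennreal_leI) (auto intro: sum_nonneg)
  also have "\<dots> = ennreal (\<Sum>j\<in>J. expectation (Y j))"
    using Y by (simp add: nn_integral_eq_integral sum_nonneg)
  finally show ?thesis .
qed

lemma nn_integral_exp_eff_size:
  fixes k :: nat
  assumes Y: "Y \<in> borel_measurable M" "\<And>\<omega>. \<omega> \<in> space M \<Longrightarrow> 0 \<le> Y \<omega> \<and> Y \<omega> \<le> 1"
    and k: "k \<ge> 2"
  shows "(\<integral>\<^sup>+\<omega>. ennreal (exp (ln k * Y \<omega>)) \<partial>M) = ennreal (exp (ln k * eff_size M k Y))"
proof -
  have ln_k: "ln (real k) > 0" using k by simp
  have int: "integrable M (\<lambda>\<omega>. exp (ln k * Y \<omega>))"
    using Y ln_k by (intro integrable_const_bound[where B="exp (ln k)"]) auto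
  have "1 \<le> (\<integral>\<omega>. exp (ln k * Y \<omega>) \<partial>M)"
    using integral_mono_AE[of M "\<lambda>_. 1" "\<lambda>\<omega>. exp (ln k * Y \<omega>)"] int Y ln_k by (simp add: prob_space)
  then have "exp (ln k * eff_size M k Y) = (\<integral>\<omega>. exp (ln k * Y \<omega>) \<partial>M)"
    using k ln_k by (simp add: eff_size_def)
  then show ?thesis
    using int by (simp add: nn_integral_eq_integral)
qed

lemma nn_integral_excess_le_powr:
  fixes Y :: "'i \<Rightarrow> 'a \<Rightarrow> real" and k :: nat
  assumes J: "finite J" and indep: "indep_vars (\<lambda>_. borel) Y J"
    and Y: "\<And>j. j \<in> J \<Longrightarrow> Y j \<in> borel_measurable M"
      "\<And>j \<omega>. j \<in> J \<Longrightarrow> \<omega> \<in> space M \<Longrightarrow> 0 \<le> Y j \<omega> \<and> Y j \<omega> \<le> 1"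
    and k: "k \<ge> 2"
  shows "(\<integral>\<^sup>+\<omega>. ennreal (max 0 ((\<Sum>j\<in>J. Y j \<omega>) - a)) \<partial>M)
           \<le> ennreal (2 * real k powr ((\<Sum>j\<in>J. eff_size M k (Y j)) - a))"
proof -
  define c where "c = ln (real k)"
  have "ln 2 \<le> c"
    using k unfolding c_def by simp
  then have c: "c \<ge> 1/2"
    using ln2_ge_two_thirds by linarith
  have indep_exp: "indep_vars (\<lambda>_. borel) (\<lambda>j \<omega>. ennreal (exp (c * Y j \<omega>))) J"
    by (rule indep_vars_compose2[OF indep]) simp
  have "(\<integral>\<^sup>+\<omega>. ennreal (max 0 ((\<Sum>j\<in>J. Y j \<omega>) - a)) \<partial>M)
      \<le> (\<integral>\<^sup>+\<omega>. ennreal (2 * exp (- c * a)) * (\<Prod>j\<in>J. ennreal (exp (c * Y j \<omega>))) \<partial>M)"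
  proof (rule nn_integral_mono)
    fix \<omega>
    have "max 0 ((\<Sum>j\<in>J. Y j \<omega>) - a) \<le> 2 * exp (c * ((\<Sum>j\<in>J. Y j \<omega>) - a))"
      by (rule max_0_le_exp[OF c])
    also have "\<dots> = 2 * exp (- c * a) * (\<Prod>j\<in>J. exp (c * Y j \<omega>))"
      by (simp add: exp_sum[OF J] sum_distrib_left right_diff_distrib exp_diff exp_minus field_simps)
    finally have "ennreal (max 0 ((\<Sum>j\<in>J. Y j \<omega>) - a))
        \<le> ennreal (2 * exp (- c * a) * (\<Prod>j\<in>J. exp (c * Y j \<omega>)))"
      by (rule ennreal_leI)
    then show "ennreal (max 0 ((\<Sum>j\<in>J. Y j \<omega>) - a))
        \<le> ennreal (2 * exp (- c * a)) * (\<Prod>j\<in>J. ennreal (exp (c * Y j \<omega>)))"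
      by (simp add: ennreal_mult prod_ennreal prod_nonneg)
  qed
  also have "\<dots> = ennreal (2 * exp (- c * a)) * (\<Prod>j\<in>J. \<integral>\<^sup>+\<omega>. ennreal (exp (c * Y j \<omega>)) \<partial>M)"
    using Y(1) by (simp add: nn_integral_cmult indep_vars_nn_integral[OF J indep_exp])
  also have "\<dots> = ennreal (2 * exp (- c * a)) * (\<Prod>j\<in>J. ennreal (exp (c * eff_size M k (Y j))))"
    using Y k unfolding c_def by (simp add: nn_integral_exp_eff_size)
  also have "\<dots> = ennreal (2 * exp (- c * a) * (\<Prod>j\<in>J. exp (c * eff_size M k (Y j))))"
    by (simp add: ennreal_mult prod_ennreal prod_nonneg)
  also have "2 * exp (- c * a) * (\<Prod>j\<in>J. exp (c * eff_size M k (Y j)))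
      = 2 * real k powr ((\<Sum>j\<in>J. eff_size M k (Y j)) - a)"
    using k by (simp add: exp_sum[OF J, symmetric] powr_def c_def sum_distrib_left
        exp_add[symmetric] algebra_simps)
  finally show ?thesis .
qed

lemma nn_integral_excess_le_excess_bound:
  fixes Y :: "'i \<Rightarrow> 'a \<Rightarrow> real" and k :: nat
  assumes J: "finite J" and indep: "indep_vars (\<lambda>_. borel) Y J"
    and Y: "\<And>j. j \<in> J \<Longrightarrow> Y j \<in> borel_measurable M"
      "\<And>j \<omega>. j \<in> J \<Longrightarrow> \<omega> \<in> space M \<Longrightarrow> 0 \<le> Y j \<omega> \<and> Y j \<omega> \<le> 1"
    and b: "b \<ge> 0" and eff_size_le: "(\<Sum>j\<in>J. eff_size M k (Y j)) \<le> b + 1"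
  shows "(\<integral>\<^sup>+\<omega>. ennreal (max 0 ((\<Sum>j\<in>J. Y j \<omega>) - (b + 3))) \<partial>M) \<le> ennreal (excess_bound b k)"
proof (cases "k \<le> 1")
  case True
  have "(\<integral>\<^sup>+\<omega>. ennreal (max 0 ((\<Sum>j\<in>J. Y j \<omega>) - (b + 3))) \<partial>M) \<le> ennreal (\<Sum>j\<in>J. expectation (Y j))"
    using J b Y by (intro nn_integral_excess_le_sum_expectation integrable_const_bound[where B=1]) auto
  also have "\<dots> \<le> ennreal (excess_bound b k)"
    using eff_size_le True by (intro ennreal_leI) (simp add: eff_size_def excess_bound_def)
  finally show ?thesis .
next
  case False
  have "(\<integral>\<^sup>+\<omega>. ennreal (max 0 ((\<Sum>j\<in>J. Y j \<omega>) - (b + 3))) \<partial>M)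
      \<le> ennreal (2 * real k powr ((\<Sum>j\<in>J. eff_size M k (Y j)) - (b + 3)))"
    using False by (intro nn_integral_excess_le_powr[OF J indep Y]) auto
  also have "\<dots> \<le> ennreal (2 * real k powr (- 2))"
    using False eff_size_le by (intro ennreal_leI mult_left_mono powr_mono) auto
  also have "2 * real k powr (- 2) = excess_bound b k"
    using False by (simp add: excess_bound_def powr_minus divide_inverse)
  finally show ?thesis .
qed

end

theorem mainTheorem7:
  fixes M :: "'a measure" and X :: "nat \<Rightarrow> nat \<Rightarrow> 'a \<Rightarrow> real"
    and m n :: nat and J :: "nat \<Rightarrow> nat set" and lv :: "nat \<Rightarrow> nat" and b :: real
  assumes P: "prob_space M"
    and meas: "\<And>i j. i < m \<Longrightarrow> j < n \<Longrightarrow> X i j \<in> borel_measurable M"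
    and nonneg: "\<And>i j \<omega>. i < m \<Longrightarrow> j < n \<Longrightarrow> \<omega> \<in> space M \<Longrightarrow> X i j \<omega> \<ge> 0"
    and indep: "prob_space.indep_vars M (\<lambda>j. PiM {..<m} (\<lambda>_. borel))
                  (\<lambda>j \<omega>. \<lambda>i\<in>{..<m}. X i j \<omega>) {..<n}"
    and J_sub: "\<And>i. i < m \<Longrightarrow> J i \<subseteq> {..<n}"
    and J_disj: "\<And>i i'. i < m \<Longrightarrow> i' < m \<Longrightarrow> i \<noteq> i' \<Longrightarrow> J i \<inter> J i' = {}"
    and J_cover: "(\<Union>i<m. J i) = {..<n}"
    and l_range: "\<And>i. i < m \<Longrightarrow> lv i \<in> {1..m}"
    and l_count: "\<And>l. l \<in> {1..m} \<Longrightarrow> card {i. i < m \<and> lv i \<le> l} \<le> l"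
    and b_nonneg: "b \<ge> 0"
    and large: "(\<Sum>i<m. \<Sum>j\<in>J i. \<integral>\<^sup>+ \<omega>. ennreal (large_part (X i j) \<omega>) \<partial>M) \<le> 2"
    and small: "\<And>i. i < m \<Longrightarrow> (\<Sum>j\<in>J i. eff_size M (lv i) (small_part (X i j))) \<le> b + 1"
  shows "(\<integral>\<^sup>+ \<omega>. (SUP i\<in>{..<m}. ennreal (\<Sum>j\<in>J i. X i j \<omega>)) \<partial>M) \<le> ennreal (4 * b + 10)"
proof -
  interpret prob_space M by (rule P)
  define S where "S i \<omega> = (\<Sum>j\<in>J i. small_part (X i j) \<omega>)" for i \<omega>
  define L where "L i \<omega> = (\<Sum>j\<in>J i. large_part (X i j) \<omega>)" for i \<omega>
  have J: "finite (J i)" "\<And>j. j \<in> J i \<Longrightarrow> j < n" if "i < m" for i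
    using J_sub[OF that] finite_subset by auto
  have excess: "(\<integral>\<^sup>+\<omega>. ennreal (max 0 (S i \<omega> - (b + 3))) \<partial>M) \<le> ennreal (excess_bound b (lv i))"
    if i: "i < m" for i
    unfolding S_def
  proof (rule nn_integral_excess_le_excess_bound[OF J(1)[OF i] _ _ _ b_nonneg small[OF i]])
    show "indep_vars (\<lambda>_. borel) (\<lambda>j. small_part (X i j)) (J i)"
      using indep_vars_subset[OF indep_vars_component[OF indep] J_sub[OF i]] i
      by (intro indep_vars_small_part) simp
  qed (use i J nonneg meas in \<open>auto simp: small_part_def\<close>)
  have "(\<Sum>i<m. \<integral>\<^sup>+\<omega>. ennreal (max 0 (S i \<omega> - (b + 3))) \<partial>M) \<le> (\<Sum>i<m. ennreal (excess_bound b (lv i)))"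
    using excess by (intro sum_mono) simp
  also have "\<dots> = ennreal (\<Sum>i<m. excess_bound b (lv i))"
    using b_nonneg by (intro sum_ennreal) (simp add: excess_bound_def)
  also have "\<dots> \<le> ennreal (b + 3)"
    by (intro ennreal_leI sum_excess_bound_levels_le b_nonneg l_range l_count)
  finally have small_total: "(\<Sum>i<m. \<integral>\<^sup>+\<omega>. ennreal (max 0 (S i \<omega> - (b + 3))) \<partial>M) \<le> ennreal (b + 3)" .
  have large_total: "(\<Sum>i<m. \<integral>\<^sup>+\<omega>. ennreal (L i \<omega>) \<partial>M) \<le> 2"
    using large J meas by (simp add: L_def large_part_def nn_integral_sum sum_nonneg flip: sum_ennreal)
  have "(\<integral>\<^sup>+\<omega>. (SUP i\<in>{..<m}. ennreal (\<Sum>j\<in>J i. X i j \<omega>)) \<partial>M)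
      = (\<integral>\<^sup>+\<omega>. (SUP i\<in>{..<m}. ennreal (S i \<omega> + L i \<omega>)) \<partial>M)"
    by (simp add: S_def L_def small_part_add_large_part flip: sum.distrib)
  also have "\<dots> \<le> ennreal (b + 3) + (\<Sum>i<m. \<integral>\<^sup>+\<omega>. ennreal (max 0 (S i \<omega> - (b + 3))) \<partial>M)
      + (\<Sum>i<m. \<integral>\<^sup>+\<omega>. ennreal (L i \<omega>) \<partial>M)"
    using J meas b_nonneg
    by (intro nn_integral_SUP_le_threshold) (auto simp: S_def L_def large_part_def intro!: sum_nonneg)
  also have "\<dots> \<le> ennreal (b + 3) + ennreal (b + 3) + 2"
    using small_total large_total by (intro add_mono) auto
  also have "\<dots> \<le> ennreal (4 * b + 10)"
    using b_nonneg by (simp flip: ennreal_plus ennreal_numeral)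
  finally show ?thesis .
qed

end
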